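(* Let $n\ge 1$ and let $a=(a_1,\dots,a_n)$ be an inversion sequence. Then $a$ avoids each of the patterns $100$, $102$ and $201$ if and only if $a$ can be written as a concatenation $a=p_1\circ q_2\circ q_3$ where: (i) $p_1$ is a (possibly empty) non-decreasing sequence with $\max(p_1)<\max(a)$ (if $p_1$ is nonempty); (ii) $q_2$ is a nonempty sequence whose entries all lie in $\{\max(a),\operatorname{premax}(a)\}$, whose first entry is $\max(a)$, and in which the value $\operatorname{premax}(a)$ occurs at most once; (iii) $q_3$ is a (possibly empty) strictly decreasing sequence all of whose entries are $<\operatorname{premax}(a)$. (When $a$ has only one distinct value, $\operatorname{premax}(a)$ is undefined; then $p_1$ and $q_3$ are empty and $q_2=a$ consists only of copies of $\max(a)$.)
   Context: An inversion sequence of length $n$ is an integer sequence $(a_1,\dots,a_n)$ with $0\le a_i<i$ for all $i$. A pattern is a sequence $\sigma$ of non-negative integers containing every value from $0$ to $\max(\sigma)$; the reduction of a sequence replaces its smallest values by $0$, the next smallest by $1$, etc. A sequence $a$ contains $\sigma$ if some (not necessarily consecutive) subsequence of $a$ has reduction $\sigma$; otherwise $a$ avoids $\sigma$. For a sequence $a$, $\max(a)$ is its largest value and $\operatorname{premax}(a)$ is the largest value of $a$ strictly less than $\max(a)$. $\circ$ denotes concatenation. *)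

theory Defs
  imports Main
begin

text \<open>Inversion sequences are lists of naturals, 0-indexed: position i (0-based)
  corresponds to a_(i+1), so the condition 0 <= a_(i+1) < i+1 becomes a!i <= i.\<close>
definition inversion_seq :: "nat list \<Rightarrow> bool" where
  "inversion_seq a \<longleftrightarrow> (\<forall>i<length a. a ! i < Suc i)"

definition reduction :: "nat list \<Rightarrow> nat list" where
  "reduction s = map (\<lambda>x. card {v \<in> set s. v < x}) s"

definition contains :: "nat list \<Rightarrow> nat list \<Rightarrow> bool" where
  "contains a \<sigma> \<longleftrightarrow> (\<exists>I. reduction (nths a I) = \<sigma>)"

definition avoids :: "nat list \<Rightarrow> nat list \<Rightarrow> bool" where
  "avoids a \<sigma> \<longleftrightarrow> \<not> contains a \<sigma>"

definition seqmax :: "nat list \<Rightarrow> nat" where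
  "seqmax a = Max (set a)"

definition premax :: "nat list \<Rightarrow> nat option" where
  "premax a = (if set a - {seqmax a} = {} then None else Some (Max (set a - {seqmax a})))"

definition below_premax :: "nat list \<Rightarrow> nat \<Rightarrow> bool" where
  "below_premax a x = (case premax a of None \<Rightarrow> False | Some p \<Rightarrow> x < p)"

definition in_top_two :: "nat list \<Rightarrow> nat \<Rightarrow> bool" where
  "in_top_two a x \<longleftrightarrow> x = seqmax a \<or> premax a = Some x"

end

theory Submission
  imports Defs
begin

text \<open>An occurrence of 100, 102 or 201 is exactly a forbidden triple \<open>i < j < k\<close> with
  \<open>a\<^sub>j < a\<^sub>i\<close>, \<open>a\<^sub>j \<le> a\<^sub>k\<close> and \<open>a\<^sub>k \<noteq> a\<^sub>i\<close>. Cut \<open>a\<close> at the first occurrence \<open>m\<close> of its maximum \<open>M\<close>.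
  Before \<open>m\<close> a descent would be followed by \<open>M\<close>, so the prefix is non-decreasing; after
  \<open>m\<close> no value below \<open>M\<close> repeats, so premax occurs at most once; and once an entry below
  premax appears, every later entry is smaller, since a larger one would be \<open>M\<close> or premax
  and form a forbidden triple with \<open>m\<close> or with an occurrence of premax. Conversely, in such a
  decomposition the middle entry of a forbidden triple can lie neither in the sorted prefix
  nor in the decreasing suffix, so it is premax, the first entry is \<open>M\<close>, and the last would
  be a second premax in \<open>q\<^sub>2\<close> or an entry of \<open>q\<^sub>3\<close> that is not below premax.\<close>

lemma nths_eq_ConsD:
  assumes "nths xs I = y # ys"
  shows "\<exists>i<length xs. i \<in> I \<and> xs ! i = y \<and> ys = nths xs {j \<in> I. i < j}"
  using assms
proof (induction xs arbitrary: I)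
  case Nil
  then show ?case by simp
next
  case (Cons x xs)
  show ?case
  proof (cases "0 \<in> I")
    case True
    then have "y = x" "ys = nths xs {j. Suc j \<in> I}"
      using Cons.prems by (simp_all add: nths_Cons)
    moreover have "nths (x # xs) {j \<in> I. 0 < j} = nths xs {j. Suc j \<in> I}"
      by (simp add: nths_Cons)
    ultimately show ?thesis using True by fastforce
  next
    case False
    then have "nths xs {j. Suc j \<in> I} = y # ys" using Cons.prems by (simp add: nths_Cons)
    then obtain i where "i < length xs" "Suc i \<in> I" "xs ! i = y"
      and "ys = nths xs {j \<in> {j. Suc j \<in> I}. i < j}" using Cons.IH by blast
    moreover have "nths (x # xs) {j \<in> I. Suc i < j} = nths xs {j \<in> {j. Suc j \<in> I}. i < j}"
      by (simp add: nths_Cons)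
    ultimately show ?thesis by (intro exI[of _ "Suc i"]) simp
  qed
qed

lemma nths_insert_least:
  assumes "i < length xs" and "\<forall>j\<in>I. i < j"
  shows "nths xs (insert i I) = xs ! i # nths xs I"
  using assms
proof (induction xs arbitrary: i I)
  case Nil
  then show ?case by simp
next
  case (Cons x xs)
  show ?case
  proof (cases i)
    case 0
    with Cons.prems show ?thesis by (auto simp: nths_Cons)
  next
    case (Suc i')
    have "{j. Suc j \<in> insert i I} = insert i' {j. Suc j \<in> I}" using Suc by auto
    moreover have "nths xs (insert i' {j. Suc j \<in> I}) = xs ! i' # nths xs {j. Suc j \<in> I}"
      using Cons.prems Suc by (intro Cons.IH) auto
    ultimately show ?thesis using Cons.prems Suc by (auto simp: nths_Cons)
  qed
qed

lemma ex_nths_eq_triple_iff: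
  "(\<exists>I. nths xs I = [x, y, z]) \<longleftrightarrow>
    (\<exists>i j k. i < j \<and> j < k \<and> k < length xs \<and> xs ! i = x \<and> xs ! j = y \<and> xs ! k = z)"
proof
  assume "\<exists>I. nths xs I = [x, y, z]"
  then obtain I where "nths xs I = [x, y, z]" by blast
  then obtain i where "i \<in> I" "xs ! i = x" and I': "nths xs {j \<in> I. i < j} = [y, z]"
    by (metis nths_eq_ConsD)
  obtain j where "j \<in> I" "i < j" "xs ! j = y" and I'': "nths xs {k \<in> {j \<in> I. i < j}. j < k} = [z]"
    using nths_eq_ConsD[OF I'] by auto
  obtain k where "k < length xs" "j < k" "xs ! k = z"
    using nths_eq_ConsD[OF I''] by auto
  then show "\<exists>i j k. i < j \<and> j < k \<and> k < length xs \<and> xs ! i = x \<and> xs ! j = y \<and> xs ! k = z"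
    using \<open>i < j\<close> \<open>xs ! i = x\<close> \<open>xs ! j = y\<close> by blast
next
  assume "\<exists>i j k. i < j \<and> j < k \<and> k < length xs \<and> xs ! i = x \<and> xs ! j = y \<and> xs ! k = z"
  then obtain i j k where "i < j" "j < k" "k < length xs" "xs ! i = x" "xs ! j = y" "xs ! k = z"
    by blast
  then have "nths xs {i, j, k} = [x, y, z]" by (simp add: nths_insert_least)
  then show "\<exists>I. nths xs I = [x, y, z]" by blast
qed

lemma length_reduction [simp]: "length (reduction s) = length s"
  by (simp add: reduction_def)

lemma contains_length3_iff:
  assumes "length \<sigma> = 3"
  shows "contains a \<sigma> \<longleftrightarrow>
    (\<exists>i j k. i < j \<and> j < k \<and> k < length a \<and> reduction [a ! i, a ! j, a ! k] = \<sigma>)"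
proof -
  have "contains a \<sigma> \<longleftrightarrow> (\<exists>x y z. (\<exists>I. nths a I = [x, y, z]) \<and> reduction [x, y, z] = \<sigma>)"
    unfolding contains_def
  proof safe
    fix I assume "\<sigma> = reduction (nths a I)"
    with assms obtain x y z where "nths a I = [x, y, z]"
      by (auto simp: numeral_3_eq_3 length_Suc_conv)
    then show "\<exists>x y z. (\<exists>I. nths a I = [x, y, z]) \<and> reduction [x, y, z] = reduction (nths a I)"
      by auto
  qed metis
  then show ?thesis unfolding ex_nths_eq_triple_iff by blast
qed

lemma reduction_triple:
  "reduction [x, y, z] = map (\<lambda>w. length (remdups (filter (\<lambda>v. v < w) [x, y, z]))) [x, y, z]"
proof -
  have "\<And>w. {v \<in> set [x, y, z]. v < w} = set (filter (\<lambda>v. v < w) [x, y, z])" by auto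
  then show ?thesis unfolding reduction_def by (simp only: length_remdups_card_conv)
qed

lemma reduction_eq_100_iff: "reduction [x, y, z] = [1, 0, 0] \<longleftrightarrow> y < x \<and> z = y"
  and reduction_eq_102_iff: "reduction [x, y, z] = [1, 0, 2] \<longleftrightarrow> y < x \<and> x < z"
  and reduction_eq_201_iff: "reduction [x, y, z] = [2, 0, 1] \<longleftrightarrow> y < z \<and> z < x"
  unfolding reduction_triple
  by (cases x y rule: linorder_cases; cases y z rule: linorder_cases;
      cases x z rule: linorder_cases; simp)+

lemma avoids_100_102_201_iff:
  "(avoids a [1, 0, 0] \<and> avoids a [1, 0, 2] \<and> avoids a [2, 0, 1]) \<longleftrightarrow>
    (\<forall>i j k. i < j \<longrightarrow> j < k \<longrightarrow> k < length a \<longrightarrow> a ! j < a ! i \<longrightarrow> a ! j \<le> a ! k \<longrightarrow>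
      a ! k = a ! i)"
proof -
  have triple: "(y < x \<longrightarrow> y \<le> z \<longrightarrow> z = x) \<longleftrightarrow>
      \<not> (reduction [x, y, z] = [1, 0, 0] \<or> reduction [x, y, z] = [1, 0, 2] \<or>
         reduction [x, y, z] = [2, 0, 1])" for x y z :: nat
    unfolding reduction_eq_100_iff reduction_eq_102_iff reduction_eq_201_iff by linarith
  show ?thesis
    unfolding avoids_def contains_length3_iff[of "[_, _, _]", simplified] triple by auto
qed

lemma seqmax_in: "a \<noteq> [] \<Longrightarrow> seqmax a \<in> set a"
  unfolding seqmax_def by simp

lemma le_seqmax: "x \<in> set a \<Longrightarrow> x \<le> seqmax a"
  unfolding seqmax_def by simp

lemma premax_SomeD:
  assumes "premax a = Some p"
  shows "p \<in> set a" and "p < seqmax a" and "\<And>x. x \<in> set a \<Longrightarrow> x \<noteq> seqmax a \<Longrightarrow> x \<le> p"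
proof -
  let ?S = "set a - {seqmax a}"
  have ne: "?S \<noteq> {}"
    using assms unfolding premax_def by (metis option.distinct(1))
  with assms have p: "p = Max ?S"
    unfolding premax_def by simp
  have "p \<in> ?S" using Max_in[of ?S] ne p by simp
  then show "p \<in> set a" and "p < seqmax a" using le_seqmax[of p a] by auto
  show "\<And>x. x \<in> set a \<Longrightarrow> x \<noteq> seqmax a \<Longrightarrow> x \<le> p" using p by simp
qed

lemma below_premax_iff_not_in_top_two:
  assumes "x \<in> set a"
  shows "below_premax a x \<longleftrightarrow> \<not> in_top_two a x"
proof (cases "premax a")
  case None
  then have "set a - {seqmax a} = {}"
    unfolding premax_def by (metis option.distinct(1))
  with assms have "x = seqmax a" by blast
  with None show ?thesis unfolding below_premax_def in_top_two_def by simp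
next
  case (Some p)
  have "below_premax a x \<longleftrightarrow> x < p" by (simp add: below_premax_def Some)
  moreover have "in_top_two a x \<longleftrightarrow> x = seqmax a \<or> x = p"
    unfolding in_top_two_def Some by auto
  moreover have "p < seqmax a" "x \<le> seqmax a"
    using premax_SomeD(2)[OF Some] le_seqmax[OF assms] .
  moreover have "x \<noteq> seqmax a \<Longrightarrow> x \<le> p"
    using premax_SomeD(3)[OF Some assms] .
  ultimately show ?thesis by (cases "x = seqmax a") auto
qed

lemma two_le_count_list_iff:
  "2 \<le> count_list xs v \<longleftrightarrow> (\<exists>s t. s < t \<and> t < length xs \<and> xs ! s = v \<and> xs ! t = v)"
proof
  assume "2 \<le> count_list xs v"
  then have "count_list xs v = Suc (Suc (count_list xs v - 2))" by linarith
  then obtain pref rest where xs: "xs = pref @ v # rest"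
    and "count_list rest v = Suc (count_list xs v - 2)"
    by (meson count_list_Suc_split_first)
  then have "v \<in> set rest" using count_notin by fastforce
  then obtain t where "t < length rest" "rest ! t = v" by (auto simp: in_set_conv_nth)
  then show "\<exists>s t. s < t \<and> t < length xs \<and> xs ! s = v \<and> xs ! t = v"
    using xs by (intro exI[of _ "length pref"] exI[of _ "Suc (length pref + t)"])
      (simp add: nth_append)
next
  assume "\<exists>s t. s < t \<and> t < length xs \<and> xs ! s = v \<and> xs ! t = v"
  then obtain s t where st: "s < t" "t < length xs" "xs ! s = v" "xs ! t = v" by blast
  have "v \<in> set (take t xs)" using st by (auto simp: in_set_conv_nth intro!: exI[of _ s])
  moreover have "v \<in> set (drop t xs)" using st by (metis Cons_nth_drop_Suc list.set_intros(1))
  ultimately have "count_list (take t xs) v \<noteq> 0" and "count_list (drop t xs) v \<noteq> 0"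
    by (simp_all add: count_list_0_iff)
  moreover have "count_list xs v = count_list (take t xs) v + count_list (drop t xs) v"
    by (metis append_take_drop_id count_list_append)
  ultimately show "2 \<le> count_list xs v" by linarith
qed

lemma below_premax_le: "below_premax a x \<Longrightarrow> y \<le> x \<Longrightarrow> below_premax a y"
  unfolding below_premax_def by (auto split: option.splits)

lemma count_list_takeWhile_le: "count_list (takeWhile P xs) v \<le> count_list xs v"
  by (metis count_list_append le_add1 takeWhile_dropWhile_id)

context
  fixes a :: "nat list"
  assumes no_forbidden_triple:
    "\<And>i j k. \<lbrakk>i < j; j < k; k < length a; a ! j < a ! i; a ! j \<le> a ! k\<rbrakk> \<Longrightarrow> a ! k = a ! i"
begin

lemma sorted_take_below:
  assumes "m < length a" and "\<And>t. t < m \<Longrightarrow> a ! t < a ! m"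
  shows "sorted (take m a)"
  unfolding sorted_iff_nth_mono_less
proof (intro allI impI)
  fix i j assume "i < j" "j < length (take m a)"
  with assms no_forbidden_triple[of i j m] show "take m a ! i \<le> take m a ! j"
    by (metis length_take less_trans min_less_iff_conj nat_less_le not_le nth_take)
qed

lemma count_list_drop_below:
  assumes "m < length a" and "v < a ! m"
  shows "count_list (drop (Suc m) a) v \<le> 1"
proof (rule ccontr)
  assume "\<not> count_list (drop (Suc m) a) v \<le> 1"
  then obtain s t where "s < t" "t < length (drop (Suc m) a)"
    "drop (Suc m) a ! s = v" "drop (Suc m) a ! t = v"
    using two_le_count_list_iff by (metis Suc_1 not_less_eq_eq)
  with assms no_forbidden_triple[of m "Suc m + s" "Suc m + t"] show False
    by (simp add: less_diff_conv add.commute)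
qed

lemma later_entries_below:
  assumes m: "a ! m = seqmax a" and "m < j" "j < k" "k < length a" "below_premax a (a ! j)"
  shows "a ! k < a ! j"
proof (rule ccontr)
  assume "\<not> a ! k < a ! j"
  then have jk: "a ! j \<le> a ! k" by simp
  obtain p where p: "premax a = Some p" "a ! j < p"
    using \<open>below_premax a (a ! j)\<close> unfolding below_premax_def by (auto split: option.splits)
  have "p < seqmax a" "a ! j < seqmax a" using premax_SomeD(2)[OF p(1)] p(2) by auto
  then have k: "a ! k = seqmax a" using no_forbidden_triple[of m j k] assms jk by simp
  obtain q where q: "q < length a" "a ! q = p"
    using premax_SomeD(1)[OF p(1)] by (metis in_set_conv_nth)
  consider "q < j" | "q = j" | "j < q" by linarith
  then show False
  proof cases
    case 1
    then show False using no_forbidden_triple[of q j k] assms jk p q k \<open>p < seqmax a\<close> by simp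
  next
    case 2
    then show False using p q by simp
  next
    case 3
    then show False using no_forbidden_triple[of m j q] assms p q \<open>p < seqmax a\<close> by simp
  qed
qed

lemma drop_from_entry_below_premax:
  assumes m: "a ! m = seqmax a" and "m < j" "j < length a" and j: "below_premax a (a ! j)"
  shows "sorted_wrt (>) (drop j a)" and "\<forall>x\<in>set (drop j a). below_premax a x"
proof -
  have low: "below_premax a (a ! k)" if "j \<le> k" "k < length a" for k
  proof (cases "k = j")
    case False
    then have "a ! k < a ! j" using later_entries_below[of m j k] assms that by simp
    then show ?thesis using j below_premax_le by simp
  qed (use j in simp)
  show "sorted_wrt (>) (drop j a)" unfolding sorted_wrt_iff_nth_less
    using later_entries_below[OF m] low assms by auto
  show "\<forall>x\<in>set (drop j a). below_premax a x"
    using low by (auto simp: in_set_conv_nth)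
qed

lemma decomposition_exists:
  assumes "a \<noteq> []"
  shows "\<exists>p1 q2 q3. a = p1 @ q2 @ q3
       \<and> sorted p1 \<and> (\<forall>x\<in>set p1. x < seqmax a)
       \<and> q2 \<noteq> [] \<and> hd q2 = seqmax a \<and> (\<forall>x\<in>set q2. in_top_two a x)
       \<and> (\<forall>p. premax a = Some p \<longrightarrow> count_list q2 p \<le> 1)
       \<and> sorted_wrt (>) q3 \<and> (\<forall>x\<in>set q3. below_premax a x)"
proof -
  define M where "M = seqmax a"
  define m where "m = (LEAST t. t < length a \<and> a ! t = M)"
  have "\<exists>t. t < length a \<and> a ! t = M"
    using seqmax_in[OF assms] unfolding M_def by (metis in_set_conv_nth)
  then have m: "m < length a" "a ! m = M"
    unfolding m_def by (metis (mono_tags, lifting) LeastI_ex)+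
  have before_m: "a ! t < M" if "t < m" for t
    using not_less_Least[OF that[unfolded m_def]] that m le_seqmax[of "a ! t" a]
    unfolding M_def by (metis le_neq_implies_less less_trans nth_mem)
  define q2 where "q2 = takeWhile (in_top_two a) (drop m a)"
  define q3 where "q3 = dropWhile (in_top_two a) (drop m a)"
  have drop_m: "drop m a = q2 @ q3" unfolding q2_def q3_def by simp
  have "in_top_two a M" unfolding in_top_two_def M_def by simp
  then have q2: "q2 = M # takeWhile (in_top_two a) (drop (Suc m) a)"
    unfolding q2_def using m by (simp add: Cons_nth_drop_Suc[symmetric])
  have p1: "sorted (take m a)" "\<forall>x\<in>set (take m a). x < M"
    using sorted_take_below[of m] m before_m by (auto simp: in_set_conv_nth)
  have count: "\<forall>p. premax a = Some p \<longrightarrow> count_list q2 p \<le> 1"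
  proof (intro allI impI)
    fix p assume "premax a = Some p"
    then have "p < M" using premax_SomeD(2) unfolding M_def by blast
    then have "count_list q2 p \<le> count_list (drop (Suc m) a) p"
      using q2 count_list_takeWhile_le by simp
    also have "\<dots> \<le> 1" using count_list_drop_below m \<open>p < M\<close> by simp
    finally show "count_list q2 p \<le> 1" .
  qed
  have top: "\<forall>x\<in>set q2. in_top_two a x"
    unfolding q2_def by (auto dest: set_takeWhileD)
  have q3_props: "sorted_wrt (>) q3 \<and> (\<forall>x\<in>set q3. below_premax a x)"
  proof (cases "q3 = []")
    case False
    define j where "j = m + length q2"
    have "q3 = drop (length q2) (drop m a)" using drop_m by simp
    then have q3: "q3 = drop j a" unfolding j_def by (simp add: add.commute)
    then have "m < j" "j < length a" using False q2 unfolding j_def by auto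
    moreover have "\<not> in_top_two a (a ! j)"
      using hd_dropWhile[OF False[unfolded q3_def]] q3 \<open>j < length a\<close>
      unfolding q3_def by (simp add: hd_drop_conv_nth)
    then have "below_premax a (a ! j)"
      using below_premax_iff_not_in_top_two \<open>j < length a\<close> by simp
    ultimately show ?thesis
      using drop_from_entry_below_premax[of m j] m q3 unfolding M_def by simp
  qed simp
  have "a = take m a @ q2 @ q3" by (metis append_take_drop_id drop_m)
  moreover have "q2 \<noteq> []" "hd q2 = M" using q2 by simp_all
  ultimately show ?thesis unfolding M_def[symmetric]
    using p1 count top q3_props by blast
qed

end

lemma sorted_append_descent_index:
  assumes "sorted p" "i < j" "(p @ r) ! j < (p @ r) ! i"
  shows "length p \<le> j"
proof (rule ccontr)
  assume "\<not> length p \<le> j"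
  then have "p ! i \<le> p ! j" using assms(1,2) by (simp add: sorted_nth_mono)
  then show False using assms(2,3) \<open>\<not> length p \<le> j\<close> by (simp add: nth_append)
qed

lemma decreasing_append_ascent_index:
  fixes s :: "'a::linorder list"
  assumes "sorted_wrt (>) s" "j < k" "k < length (r @ s)" "(r @ s) ! j \<le> (r @ s) ! k"
  shows "j < length r"
proof (rule ccontr)
  assume "\<not> j < length r"
  then have "s ! (k - length r) < s ! (j - length r)"
    using assms(1-3) by (intro sorted_wrt_nth_less[where P = "(>)"]) auto
  then show False using assms(2,4) \<open>\<not> j < length r\<close> by (simp add: nth_append)
qed

lemma decomposition_no_forbidden_triple:
  assumes a: "a = p1 @ q2 @ q3" and p1_sorted: "sorted p1"
    and top: "\<forall>x\<in>set q2. in_top_two a x"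
    and count: "\<forall>p. premax a = Some p \<longrightarrow> count_list q2 p \<le> 1"
    and q3_decreasing: "sorted_wrt (>) q3" and low: "\<forall>x\<in>set q3. below_premax a x"
    and ijk: "i < j" "j < k" "k < length a" "a ! j < a ! i" "a ! j \<le> a ! k"
  shows "a ! k = a ! i"
proof -
  let ?n1 = "length p1" and ?n2 = "length q2"
  have in_q2: "t - ?n1 < ?n2" "a ! t = q2 ! (t - ?n1)" if "?n1 \<le> t" "t < ?n1 + ?n2" for t
  proof -
    show "t - ?n1 < ?n2" using that by arith
    then show "a ! t = q2 ! (t - ?n1)" using that by (simp add: a nth_append_left nth_append_right)
  qed
  have in_q3: "a ! t \<in> set q3" if "?n1 + ?n2 \<le> t" "t < length a" for t
    using that by (simp add: a nth_append_right)
  have j: "?n1 \<le> j" "j < ?n1 + ?n2"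
    using sorted_append_descent_index[of p1 i j "q2 @ q3"]
      decreasing_append_ascent_index[of q3 j k "p1 @ q2"] a ijk p1_sorted q3_decreasing by simp_all
  then have "in_top_two a (a ! j)" using top in_q2 by (metis nth_mem)
  moreover have "a ! j \<noteq> seqmax a" using ijk le_seqmax[of "a ! i" a] by simp
  ultimately have p: "premax a = Some (a ! j)" unfolding in_top_two_def by simp
  have i: "a ! i = seqmax a" using premax_SomeD(3)[OF p, of "a ! i"] ijk by force
  show ?thesis
  proof (rule ccontr)
    assume "a ! k \<noteq> a ! i"
    then have k: "a ! k = a ! j" using premax_SomeD(3)[OF p, of "a ! k"] i ijk by force
    consider "k < ?n1 + ?n2" | "?n1 + ?n2 \<le> k" by linarith
    then show False
    proof cases
      case 1
      then have "j - ?n1 < k - ?n1" "k - ?n1 < ?n2" using j ijk in_q2 by arith+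
      moreover have "q2 ! (j - ?n1) = a ! j" "q2 ! (k - ?n1) = a ! j"
        using in_q2 j 1 ijk k by (metis less_trans nat_less_le)+
      ultimately have "2 \<le> count_list q2 (a ! j)"
        unfolding two_le_count_list_iff by blast
      then show False using count p by fastforce
    next
      case 2
      then have "below_premax a (a ! k)" using low in_q3 ijk by blast
      then show False using p k unfolding below_premax_def by simp
    qed
  qed
qed

theorem mainTheorem1:
  fixes a :: "nat list"
  assumes "length a \<ge> 1" and "inversion_seq a"
  shows "(avoids a [1,0,0] \<and> avoids a [1,0,2] \<and> avoids a [2,0,1]) \<longleftrightarrow>
    (\<exists>p1 q2 q3. a = p1 @ q2 @ q3
       \<and> sorted p1 \<and> (\<forall>x\<in>set p1. x < seqmax a)
       \<and> q2 \<noteq> [] \<and> hd q2 = seqmax a \<and> (\<forall>x\<in>set q2. in_top_two a x)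
       \<and> (\<forall>p. premax a = Some p \<longrightarrow> count_list q2 p \<le> 1)
       \<and> sorted_wrt (>) q3 \<and> (\<forall>x\<in>set q3. below_premax a x))"
proof -
  have "a \<noteq> []" using assms(1) by auto
  then show ?thesis
    unfolding avoids_100_102_201_iff
    by (intro iffI allI impI decomposition_exists; (elim exE conjE)?)
      (blast intro: decomposition_no_forbidden_triple)+
qed

end
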